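(* Let $p\ge 2$ be an integer and $\eta>0$. Then $\tau_\ell^-(s)\le\frac{\pi}{2}$ for every $s\in[0,1]$.
   Context: For an integer $p\ge 2$ and a real parameter $\eta>-1$, define for $\tau\ge 0$ and $s\in[-1,1]$ $$\ell_-(\tau,s)=\cos\tau\,\sin\!\Big(\tau\eta s-\tfrac{\pi}{p}\Big)+s\sin\tau\,\cos\!\Big(\tau\eta s-\tfrac{\pi}{p}\Big),$$ and let $\tau_\ell^-(s)$ be the smallest positive root in $\tau$ of $\ell_-(\tau,s)=0$. *)

theory Defs
  imports "HOL-Analysis.Analysis"
begin

definition ell_minus :: "nat \<Rightarrow> real \<Rightarrow> real \<Rightarrow> real \<Rightarrow> real" where
  "ell_minus p \<eta> \<tau> s =
     cos \<tau> * sin (\<tau> * \<eta> * s - pi / real p) + s * sin \<tau> * cos (\<tau> * \<eta> * s - pi / real p)"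

definition tau_ell_minus :: "nat \<Rightarrow> real \<Rightarrow> real \<Rightarrow> real" where
  "tau_ell_minus p \<eta> s = Inf {\<tau>. 0 < \<tau> \<and> ell_minus p \<eta> \<tau> s = 0}"

end

theory Submission
  imports Defs
begin

text \<open>At \<open>\<tau> = 0\<close> the function equals \<open>-sin (pi/p) < 0\<close>. It is nonnegative at some
  \<open>T \<in> (0, pi/2]\<close>: at \<open>T = pi/2\<close> it equals \<open>s cos (pi \<eta> s/2 - pi/p)\<close>, which is \<open>\<ge> 0\<close>
  as long as the phase \<open>pi \<eta> s/2 - pi/p\<close> is still \<open>\<le> 0\<close>; otherwise the phase vanishes at some
  \<open>T < pi/2\<close>, where the function equals \<open>s sin T > 0\<close>. The intermediate value theorem gives a
  root in \<open>(0, T]\<close>, which bounds the infimum of the positive roots.\<close>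

lemma continuous_on_ell_minus: "continuous_on A (\<lambda>\<tau>. ell_minus p \<eta> \<tau> s)"
  unfolding ell_minus_def by (intro continuous_intros)

lemma ell_minus_at_zero_neg:
  assumes "p \<ge> 2"
  shows "ell_minus p \<eta> 0 s < 0"
proof -
  have "0 < pi / real p" "pi / real p < pi"
    using assms by (simp_all add: field_simps)
  then have "sin (pi / real p) > 0"
    by (intro sin_gt_zero)
  then show ?thesis
    unfolding ell_minus_def by simp
qed

lemma ell_minus_nonneg_before_half_pi:
  assumes "p \<ge> 2" and "\<eta> \<ge> 0" and "s \<ge> 0"
  obtains T where "0 < T" "T \<le> pi / 2" "ell_minus p \<eta> T s \<ge> 0"
proof (cases "pi / 2 * \<eta> * s \<le> pi / real p")
  case True
  have "pi / real p \<le> pi / 2"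
    using assms(1) by (intro divide_left_mono) auto
  moreover have "pi / 2 * \<eta> * s \<ge> 0"
    using assms by simp
  ultimately have "cos (pi / 2 * \<eta> * s - pi / real p) \<ge> 0"
    using True by (intro cos_ge_zero) auto
  then have "ell_minus p \<eta> (pi / 2) s \<ge> 0"
    unfolding ell_minus_def using assms by simp
  then show ?thesis
    using that[of "pi / 2"] by simp
next
  case False
  then have "\<eta> * s > 0"
    using assms by (cases "\<eta> * s = 0") auto
  define T where "T = pi / (real p * \<eta> * s)"
  have p_pos: "real p > 0"
    using assms(1) by simp
  have "\<eta> \<noteq> 0" "s \<noteq> 0"
    using \<open>\<eta> * s > 0\<close> by auto
  then have phase: "T * \<eta> * s = pi / real p"
    unfolding T_def using p_pos by (simp add: field_simps)
  have "real p * \<eta> * s > 0"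
    using \<open>\<eta> * s > 0\<close> p_pos by (simp add: mult.assoc)
  then have "T > 0"
    unfolding T_def by simp
  moreover have "T < pi / 2"
    using False phase \<open>\<eta> * s > 0\<close>
    by (metis mult.assoc mult_less_cancel_right_pos not_le)
  moreover have "ell_minus p \<eta> T s \<ge> 0"
    unfolding ell_minus_def phase using \<open>T > 0\<close> \<open>T < pi / 2\<close> assms(3)
    by (simp add: sin_ge_zero)
  ultimately show ?thesis
    using that by simp
qed

lemma ell_minus_root_le_half_pi:
  assumes "p \<ge> 2" and "\<eta> \<ge> 0" and "s \<ge> 0"
  obtains \<tau> where "0 < \<tau>" "\<tau> \<le> pi / 2" "ell_minus p \<eta> \<tau> s = 0"
proof -
  obtain T where T: "0 < T" "T \<le> pi / 2" "ell_minus p \<eta> T s \<ge> 0"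
    using ell_minus_nonneg_before_half_pi[OF assms] .
  have neg0: "ell_minus p \<eta> 0 s < 0"
    using ell_minus_at_zero_neg[OF assms(1)] .
  obtain \<tau> where \<tau>: "0 \<le> \<tau>" "\<tau> \<le> T" "ell_minus p \<eta> \<tau> s = 0"
    using IVT'[of "\<lambda>\<tau>. ell_minus p \<eta> \<tau> s" 0 0 T] neg0 T continuous_on_ell_minus by force
  with neg0 have "\<tau> \<noteq> 0"
    by auto
  with \<tau> T show ?thesis
    by (intro that) auto
qed

lemma tau_ell_minus_le_root:
  assumes "0 < \<tau>" and "ell_minus p \<eta> \<tau> s = 0"
  shows "tau_ell_minus p \<eta> s \<le> \<tau>"
  unfolding tau_ell_minus_def
  by (rule cInf_lower) (use assms in \<open>auto intro: bdd_belowI[of _ 0]\<close>)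

theorem mainTheorem5:
  fixes p :: nat and \<eta> s :: real
  assumes "p \<ge> 2" and "\<eta> > 0" and "0 \<le> s" and "s \<le> 1"
  shows "(\<exists>\<tau>. 0 < \<tau> \<and> ell_minus p \<eta> \<tau> s = 0) \<and> tau_ell_minus p \<eta> s \<le> pi / 2"
proof -
  obtain \<tau> where "0 < \<tau>" "\<tau> \<le> pi / 2" "ell_minus p \<eta> \<tau> s = 0"
    using ell_minus_root_le_half_pi assms(1-3) by (metis less_imp_le)
  then show ?thesis
    using tau_ell_minus_le_root by fastforce
qed

end
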